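(* Let $(M,g)$ be a space-time of dimension $n=4$ and $u$ a time-like unit vector field ($u_ku^k=-1$) that is Weyl compatible, i.e. $$(u_iC_{jklm}+u_jC_{kilm}+u_kC_{ijlm})u^m=0,$$ where $C_{abcd}$ is the Weyl tensor. Let $E_{ab}=u^bu^cC_{abcd}$-type electric part be defined by $E_{ad}=u^bu^cC_{abcd}$. Then $$C_{abcd}=2\big(u_au_dE_{bc}-u_au_cE_{bd}+u_bu_cE_{ad}-u_bu_dE_{ac}\big)+g_{ad}E_{bc}-g_{ac}E_{bd}+g_{bc}E_{ad}-g_{bd}E_{ac},$$ and $C^2=8E^2$, where $C^2=C_{abcd}C^{abcd}$ and $E^2=E_{ab}E^{ab}$.
   Context: Indices are raised and lowered with the metric $g$. *)

theory Defs
  imports "HOL-Analysis.Analysis" "HOL-Library.Numeral_Type"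
begin

text \<open>Pointwise (tangent-space) formalization. Indices range over the 4-element type 4.
  The metric at the point is a matrix g :: real^4^4 (components g$a$b, lower indices);
  its inverse (upper indices) is matrix_inv g.\<close>

definition minkowski :: "real^4^4" where
  "minkowski = (\<chi> i j. if i = j then (if i = 0 then -1 else 1) else 0)"

definition lorentzian :: "real^4^4 \<Rightarrow> bool" where
  "lorentzian g \<longleftrightarrow> transpose g = g \<and> (\<exists>P. transpose P ** g ** P = minkowski)"

definition lower :: "real^4^4 \<Rightarrow> (4 \<Rightarrow> real) \<Rightarrow> (4 \<Rightarrow> real)" where
  "lower g v = (\<lambda>a. \<Sum>b\<in>UNIV. g$a$b * v b)"

definition weyl_tensor :: "real^4^4 \<Rightarrow> (4 \<Rightarrow> 4 \<Rightarrow> 4 \<Rightarrow> 4 \<Rightarrow> real) \<Rightarrow> bool" where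
  "weyl_tensor g C \<longleftrightarrow>
     (\<forall>a b c d. C a b c d = - C b a c d) \<and>
     (\<forall>a b c d. C a b c d = - C a b d c) \<and>
     (\<forall>a b c d. C a b c d = C c d a b) \<and>
     (\<forall>a b c d. C a b c d + C a c d b + C a d b c = 0) \<and>
     (\<forall>b d. (\<Sum>a\<in>UNIV. \<Sum>c\<in>UNIV. (matrix_inv g)$a$c * C a b c d) = 0)"

definition weyl_compatible ::
  "real^4^4 \<Rightarrow> (4 \<Rightarrow> 4 \<Rightarrow> 4 \<Rightarrow> 4 \<Rightarrow> real) \<Rightarrow> (4 \<Rightarrow> real) \<Rightarrow> bool" where
  "weyl_compatible g C u \<longleftrightarrow>
     (\<forall>i j k l. (\<Sum>m\<in>UNIV. (lower g u i * C j k l m + lower g u j * C k i l m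
                             + lower g u k * C i j l m) * u m) = 0)"

definition electric :: "(4 \<Rightarrow> 4 \<Rightarrow> 4 \<Rightarrow> 4 \<Rightarrow> real) \<Rightarrow> (4 \<Rightarrow> real) \<Rightarrow> 4 \<Rightarrow> 4 \<Rightarrow> real" where
  "electric C u a d = (\<Sum>b\<in>UNIV. \<Sum>c\<in>UNIV. u b * u c * C a b c d)"

definition sq4 :: "real^4^4 \<Rightarrow> (4 \<Rightarrow> 4 \<Rightarrow> 4 \<Rightarrow> 4 \<Rightarrow> real) \<Rightarrow> real" where
  "sq4 g T = (\<Sum>a\<in>UNIV. \<Sum>b\<in>UNIV. \<Sum>c\<in>UNIV. \<Sum>d\<in>UNIV.
     \<Sum>p\<in>UNIV. \<Sum>q\<in>UNIV. \<Sum>r\<in>UNIV. \<Sum>s\<in>UNIV.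
       T a b c d * (matrix_inv g)$a$p * (matrix_inv g)$b$q * (matrix_inv g)$c$r
         * (matrix_inv g)$d$s * T p q r s)"

definition sq2 :: "real^4^4 \<Rightarrow> (4 \<Rightarrow> 4 \<Rightarrow> real) \<Rightarrow> real" where
  "sq2 g T = (\<Sum>a\<in>UNIV. \<Sum>b\<in>UNIV. \<Sum>p\<in>UNIV. \<Sum>q\<in>UNIV.
       T a b * (matrix_inv g)$a$p * (matrix_inv g)$b$q * T p q)"

end

theory Submission
  imports Defs
begin

text \<open>Contracting the compatibility condition with u^i and using u_i u^i = -1 gives
  C_jklm u^m = u_k E_jl - u_j E_kl. The tensor R on the right-hand side of the claimed identity
  has the pair symmetries of C, is traceless (this is where n = 4 enters) and has the same
  contraction with u. So D = C - R is a traceless pair-symmetric tensor annihilated by u; in an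
  orthonormal frame with time axis u it lives on the 3-dimensional spatial slice, where its 6
  independent components are determined by its 6 traces, hence D = 0.
  For C^2 = 8 E^2 contract R with C: the terms containing g produce traces of C, and each of the
  four terms u u E produces E^2.\<close>

section \<open>Finite sums\<close>

lemma UNIV_4_cases: "(x::4) = 0 \<or> x = 1 \<or> x = 2 \<or> x = 3"
  using exhaust_4[of x] by auto

lemma sum_UNIV_4: "sum f (UNIV::4 set) = f 0 + f 1 + f 2 + f 3"
proof -
  have four: "(4::4) = 0" by simp
  show ?thesis using sum_4[of f] by (simp add: four ac_simps)
qed

lemma prod_UNIV_4: "prod f (UNIV::4 set) = f 0 * f 1 * f 2 * f 3"
proof -
  have four: "(4::4) = 0" by simp
  show ?thesis unfolding UNIV_4 by (simp add: four ac_simps)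
qed

lemma sum_delta_left:
  fixes f :: "'a::finite \<Rightarrow> 'b::comm_semiring_1"
  shows "(\<Sum>b\<in>UNIV. (if a = b then 1 else 0) * f b) = f a"
  by (simp add: if_distrib[of "\<lambda>x. x * _"] cong: if_cong)

lemma sum_delta_right:
  fixes f :: "'a::finite \<Rightarrow> 'b::comm_semiring_1"
  shows "(\<Sum>b\<in>UNIV. (if b = a then 1 else 0) * f b) = f a"
  by (simp add: if_distrib[of "\<lambda>x. x * _"] cong: if_cong)

lemma sum_swap_middle:
  "(\<Sum>x\<in>A. \<Sum>y\<in>B. \<Sum>z\<in>C. \<Sum>w\<in>D. f x y z w) = (\<Sum>x\<in>A. \<Sum>z\<in>C. \<Sum>y\<in>B. \<Sum>w\<in>D. f x y z w)"
  by (rule sum.cong[OF refl], rule sum.swap)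

lemma sum_swap_last:
  "(\<Sum>x\<in>A. \<Sum>y\<in>B. \<Sum>z\<in>C. \<Sum>w\<in>D. f x y z w) = (\<Sum>x\<in>A. \<Sum>y\<in>B. \<Sum>w\<in>D. \<Sum>z\<in>C. f x y z w)"
  by (rule sum.cong[OF refl], rule sum.cong[OF refl], rule sum.swap)

lemma sum_swap_first_to_third:
  "(\<Sum>x\<in>A. \<Sum>y\<in>B. \<Sum>z\<in>C. \<Sum>w\<in>D. f x y z w) = (\<Sum>y\<in>B. \<Sum>z\<in>C. \<Sum>x\<in>A. \<Sum>w\<in>D. f x y z w)"
  by (rule trans[OF sum.swap], rule sum_swap_middle)

lemma sum_swap_pairs:
  "(\<Sum>x\<in>A. \<Sum>y\<in>B. \<Sum>z\<in>C. \<Sum>w\<in>D. f x y z w) = (\<Sum>z\<in>C. \<Sum>w\<in>D. \<Sum>x\<in>A. \<Sum>y\<in>B. f x y z w)"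
proof -
  have "(\<Sum>x\<in>A. \<Sum>y\<in>B. \<Sum>z\<in>C. \<Sum>w\<in>D. f x y z w) = (\<Sum>x\<in>A. \<Sum>z\<in>C. \<Sum>y\<in>B. \<Sum>w\<in>D. f x y z w)"
    by (rule sum_swap_middle)
  also have "\<dots> = (\<Sum>z\<in>C. \<Sum>x\<in>A. \<Sum>y\<in>B. \<Sum>w\<in>D. f x y z w)" by (rule sum.swap)
  also have "\<dots> = (\<Sum>z\<in>C. \<Sum>x\<in>A. \<Sum>w\<in>D. \<Sum>y\<in>B. f x y z w)" by (rule sum_swap_last)
  also have "\<dots> = (\<Sum>z\<in>C. \<Sum>w\<in>D. \<Sum>x\<in>A. \<Sum>y\<in>B. f x y z w)" by (rule sum_swap_middle)
  finally show ?thesis .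
qed

lemma sum_last_to_first:
  "(\<Sum>a\<in>A. \<Sum>b\<in>B. \<Sum>c\<in>C. \<Sum>d\<in>D. \<Sum>x\<in>X. f a b c d x) = (\<Sum>x\<in>X. \<Sum>a\<in>A. \<Sum>b\<in>B. \<Sum>c\<in>C. \<Sum>d\<in>D. f a b c d x)"
proof -
  have "(\<Sum>a\<in>A. \<Sum>b\<in>B. \<Sum>c\<in>C. \<Sum>d\<in>D. \<Sum>x\<in>X. f a b c d x) =
      (\<Sum>a\<in>A. \<Sum>b\<in>B. \<Sum>c\<in>C. \<Sum>x\<in>X. \<Sum>d\<in>D. f a b c d x)"
    by (rule sum.cong[OF refl], rule sum.cong[OF refl], rule sum.cong[OF refl], rule sum.swap)
  also have "\<dots> = (\<Sum>a\<in>A. \<Sum>b\<in>B. \<Sum>x\<in>X. \<Sum>c\<in>C. \<Sum>d\<in>D. f a b c d x)"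
    by (rule sum_swap_last)
  also have "\<dots> = (\<Sum>a\<in>A. \<Sum>x\<in>X. \<Sum>b\<in>B. \<Sum>c\<in>C. \<Sum>d\<in>D. f a b c d x)"
    by (rule sum_swap_middle)
  also have "\<dots> = (\<Sum>x\<in>X. \<Sum>a\<in>A. \<Sum>b\<in>B. \<Sum>c\<in>C. \<Sum>d\<in>D. f a b c d x)"
    by (rule sum.swap)
  finally show ?thesis .
qed

lemma sum_swap_quadruples:
  "(\<Sum>a\<in>A. \<Sum>b\<in>B. \<Sum>c\<in>C. \<Sum>d\<in>D. \<Sum>x\<in>X. \<Sum>y\<in>Y. \<Sum>z\<in>Z. \<Sum>w\<in>W. f a b c d x y z w) =
   (\<Sum>x\<in>X. \<Sum>y\<in>Y. \<Sum>z\<in>Z. \<Sum>w\<in>W. \<Sum>a\<in>A. \<Sum>b\<in>B. \<Sum>c\<in>C. \<Sum>d\<in>D. f a b c d x y z w)"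
  by (rule trans[OF sum_last_to_first], rule sum.cong[OF refl],
      rule trans[OF sum_last_to_first], rule sum.cong[OF refl],
      rule trans[OF sum_last_to_first], rule sum.cong[OF refl], rule sum_last_to_first)

lemma sum_antisymmetric_first_pair:
  fixes T :: "'a \<Rightarrow> 'a \<Rightarrow> 'b \<Rightarrow> 'c \<Rightarrow> 'r::comm_ring"
  assumes "\<And>a b c d. T a b c d = - T b a c d"
  shows "(\<Sum>a\<in>A. \<Sum>b\<in>A. \<Sum>c\<in>C. \<Sum>d\<in>D. F a b c d * T a b c d)
       = - (\<Sum>a\<in>A. \<Sum>b\<in>A. \<Sum>c\<in>C. \<Sum>d\<in>D. F b a c d * T a b c d)"
proof -
  have "F a b c d * T a b c d = - (F a b c d * T b a c d)" for a b c d
    using assms[of a b c d] by simp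
  then have "(\<Sum>a\<in>A. \<Sum>b\<in>A. \<Sum>c\<in>C. \<Sum>d\<in>D. F a b c d * T a b c d)
      = - (\<Sum>a\<in>A. \<Sum>b\<in>A. \<Sum>c\<in>C. \<Sum>d\<in>D. F a b c d * T b a c d)"
    by (simp add: sum_negf)
  also have "\<dots> = - (\<Sum>a\<in>A. \<Sum>b\<in>A. \<Sum>c\<in>C. \<Sum>d\<in>D. F b a c d * T a b c d)"
    by (rule arg_cong[where f = uminus], rule sum.swap)
  finally show ?thesis .
qed

lemma sum_antisymmetric_last_pair:
  fixes T :: "'a \<Rightarrow> 'b \<Rightarrow> 'c \<Rightarrow> 'c \<Rightarrow> 'r::comm_ring"
  assumes "\<And>a b c d. T a b c d = - T a b d c"
  shows "(\<Sum>a\<in>A. \<Sum>b\<in>B. \<Sum>c\<in>C. \<Sum>d\<in>C. F a b c d * T a b c d)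
       = - (\<Sum>a\<in>A. \<Sum>b\<in>B. \<Sum>c\<in>C. \<Sum>d\<in>C. F a b d c * T a b c d)"
proof -
  have "F a b c d * T a b c d = - (F a b c d * T a b d c)" for a b c d
    using assms[of a b c d] by simp
  then have "(\<Sum>a\<in>A. \<Sum>b\<in>B. \<Sum>c\<in>C. \<Sum>d\<in>C. F a b c d * T a b c d)
      = - (\<Sum>a\<in>A. \<Sum>b\<in>B. \<Sum>c\<in>C. \<Sum>d\<in>C. F a b c d * T a b d c)"
    by (simp add: sum_negf)
  also have "\<dots> = - (\<Sum>a\<in>A. \<Sum>b\<in>B. \<Sum>c\<in>C. \<Sum>d\<in>C. F a b d c * T a b c d)"
    by (rule arg_cong[where f = uminus], rule sum_swap_last)
  finally show ?thesis .
qed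

lemma sum_antisymmetric_quadratic:
  fixes Y :: "'a \<Rightarrow> 'a \<Rightarrow> real"
  assumes "\<And>a b. Y a b = - Y b a"
  shows "(\<Sum>a\<in>A. \<Sum>b\<in>A. u a * u b * Y a b) = 0"
proof -
  let ?S = "\<Sum>a\<in>A. \<Sum>b\<in>A. u a * u b * Y a b"
  have "?S = (\<Sum>b\<in>A. \<Sum>a\<in>A. u a * u b * Y a b)" by (rule sum.swap)
  also have "\<dots> = (\<Sum>b\<in>A. \<Sum>a\<in>A. - (u b * u a * Y b a))"
    by (intro sum.cong refl) (subst assms, simp add: mult.commute)
  also have "\<dots> = - ?S" by (simp add: sum_negf)
  finally have "2 * ?S = 0" by simp
  then show ?thesis by simp
qed

section \<open>Lorentzian metrics and adapted frames\<close>

definition quad_form :: "real^'n^'n \<Rightarrow> real^'n \<Rightarrow> real" where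
  "quad_form A x = x \<bullet> (A *v x)"

lemma quad_form_congruence: "quad_form (transpose P ** A ** P) x = quad_form A (P *v x)"
proof -
  have "quad_form (transpose P ** A ** P) x = x \<bullet> (transpose P *v (A *v (P *v x)))"
    unfolding quad_form_def by (simp add: matrix_vector_mul_assoc matrix_mul_assoc)
  also have "\<dots> = x \<bullet> ((A *v (P *v x)) v* P)" by simp
  also have "\<dots> = (A *v (P *v x)) \<bullet> (P *v x)" by (metis inner_commute dot_lmul_matrix)
  also have "\<dots> = quad_form A (P *v x)" unfolding quad_form_def by (simp add: inner_commute)
  finally show ?thesis .
qed

lemma quad_form_sum: "quad_form A x = (\<Sum>i\<in>UNIV. \<Sum>j\<in>UNIV. x$i * A$i$j * x$j)"
  unfolding quad_form_def inner_vec_def matrix_vector_mult_def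
  by (simp add: sum_distrib_left mult_ac)

lemma det_minkowski: "det minkowski = -1"
  by (subst det_diagonal) (auto simp: minkowski_def prod_UNIV_4)

lemma minkowski_mult_minkowski: "minkowski ** minkowski = mat 1"
  unfolding vec_eq_iff
proof (intro allI)
  fix i j :: 4
  show "(minkowski ** minkowski) $ i $ j = mat 1 $ i $ j"
    using UNIV_4_cases[of i] UNIV_4_cases[of j]
    by (elim disjE) (simp_all add: matrix_matrix_mult_def minkowski_def mat_def sum_UNIV_4)
qed

lemma transpose_minkowski: "transpose minkowski = minkowski"
  unfolding vec_eq_iff minkowski_def transpose_def by simp

lemma congruent_minkowski_invertible:
  fixes Q g :: "real^4^4"
  assumes "transpose Q ** g ** Q = minkowski"
  shows "invertible Q"
proof -
  have "det (transpose Q) * det g * det Q = -1"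
    using arg_cong[OF assms, of det] det_minkowski by (simp add: det_mul)
  then have "det Q \<noteq> 0" by auto
  then show ?thesis by (simp add: invertible_det_nz)
qed

lemma matrix_inv_unique:
  fixes A B :: "'a::field^'n^'n"
  assumes "B ** A = mat 1"
  shows "matrix_inv A = B"
proof -
  have "\<exists>B'. A ** B' = mat 1 \<and> B' ** A = mat 1"
    using assms matrix_left_right_inverse by blast
  then have "A ** matrix_inv A = mat 1"
    unfolding matrix_inv_def by (rule someI_ex[THEN conjunct1])
  then have "B ** (A ** matrix_inv A) = B" by simp
  then show ?thesis using assms by (simp add: matrix_mul_assoc)
qed

lemma congruent_minkowski_matrix_inv:
  fixes Q g :: "real^4^4"
  assumes QgQ: "transpose Q ** g ** Q = minkowski"
  shows "matrix_inv g = Q ** minkowski ** transpose Q"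
    and "matrix_inv g ** g = mat 1"
proof -
  obtain Qi where QQi: "Q ** Qi = mat 1"
    using congruent_minkowski_invertible[OF QgQ] invertible_right_inverse by blast
  have "Q ** minkowski ** transpose Q ** g ** Q = Q ** minkowski ** (transpose Q ** g ** Q)"
    by (simp add: matrix_mul_assoc)
  also have "\<dots> = Q" using QgQ minkowski_mult_minkowski by (simp add: matrix_mul_assoc[symmetric])
  finally have "Q ** minkowski ** transpose Q ** g ** Q ** Qi = Q ** Qi" by simp
  then have left_inv: "Q ** minkowski ** transpose Q ** g = mat 1"
    using QQi by (simp add: matrix_mul_assoc[symmetric])
  then show inv: "matrix_inv g = Q ** minkowski ** transpose Q" by (rule matrix_inv_unique)
  show "matrix_inv g ** g = mat 1" using left_inv unfolding inv .
qed

lemma lorentzian_symmetric: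
  assumes "lorentzian g"
  shows "g$a$b = g$b$a"
proof -
  have "(transpose g)$b$a = g$b$a" using assms unfolding lorentzian_def by simp
  then show ?thesis by (simp add: transpose_def)
qed

lemma lorentzian_matrix_inv_symmetric:
  assumes "lorentzian g"
  shows "matrix_inv g $a$b = matrix_inv g $b$a"
proof -
  obtain Q where "transpose Q ** g ** Q = minkowski" using assms unfolding lorentzian_def by blast
  then have "transpose (matrix_inv g) = matrix_inv g"
    by (simp add: congruent_minkowski_matrix_inv matrix_transpose_mul transpose_minkowski matrix_mul_assoc)
  then have "(transpose (matrix_inv g))$b$a = matrix_inv g $b$a" by simp
  then show ?thesis by (simp add: transpose_def)
qed

lemma lorentzian_matrix_inv_mult:
  assumes "lorentzian g"
  shows "(\<Sum>c\<in>UNIV. matrix_inv g $a$c * g$c$b) = (if a = b then 1 else 0)"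
proof -
  obtain Q where "transpose Q ** g ** Q = minkowski" using assms unfolding lorentzian_def by blast
  then have "(matrix_inv g ** g) $a$b = mat 1 $a$b" by (simp add: congruent_minkowski_matrix_inv(2))
  then show ?thesis by (simp add: matrix_matrix_mult_def mat_def)
qed

lemma lorentzian_raise_lower:
  assumes "lorentzian g"
  shows "(\<Sum>c\<in>UNIV. matrix_inv g $a$c * lower g u c) = u a"
proof -
  have "(\<Sum>c\<in>UNIV. matrix_inv g $a$c * lower g u c)
      = (\<Sum>b\<in>UNIV. (\<Sum>c\<in>UNIV. matrix_inv g $a$c * g$c$b) * u b)"
    unfolding lower_def sum_distrib_left sum_distrib_right mult.assoc by (rule sum.swap)
  also have "\<dots> = u a" by (simp add: lorentzian_matrix_inv_mult[OF assms] sum_delta_left)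
  finally show ?thesis .
qed

definition spatial_norm_sq :: "real^4 \<Rightarrow> real" where
  "spatial_norm_sq x = (x$1)^2 + (x$2)^2 + (x$3)^2"

text \<open>A rational parametrisation of the boosts: scaled_boost x is (1 - |x|^2) times the boost
  mapping e_0 to ((1 + |x|^2) e_0 + 2 x) / (1 - |x|^2), which avoids square roots.\<close>
definition scaled_boost :: "real^4 \<Rightarrow> real^4^4" where
  "scaled_boost x = (\<chi> i j.
     if i = 0 \<and> j = 0 then 1 + spatial_norm_sq x
     else if i = 0 then 2 * x$j
     else if j = 0 then 2 * x$i
     else (if i = j then 1 - spatial_norm_sq x else 0) + 2 * x$i * x$j)"

lemma scaled_boost_lorentz:
  "transpose (scaled_boost x) ** minkowski ** scaled_boost x
     = ((1 - spatial_norm_sq x)^2) *\<^sub>R minkowski"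
  unfolding vec_eq_iff forall_4
  by (simp add: matrix_matrix_mult_def transpose_def scaled_boost_def minkowski_def sum_UNIV_4
      spatial_norm_sq_def algebra_simps power2_eq_square)

lemma lorentz_transformation_to_timelike_unit:
  fixes w :: "real^4"
  assumes unit: "(w$1)^2 + (w$2)^2 + (w$3)^2 = (w$0)^2 - 1" and future: "w$0 > 0"
  obtains L where "transpose L ** minkowski ** L = minkowski" "\<And>i. L$i$0 = w$i"
proof -
  define x :: "real^4" where "x = (\<chi> i. w$i / (w$0 + 1))"
  have ne: "w$0 + 1 \<noteq> 0" using future by linarith
  have "spatial_norm_sq x = ((w$1)^2 + (w$2)^2 + (w$3)^2) / (w$0 + 1)^2"
    unfolding spatial_norm_sq_def x_def by (simp add: power_divide add_divide_distrib)
  also have "\<dots> = (w$0 - 1) * (w$0 + 1) / ((w$0 + 1) * (w$0 + 1))"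
    unfolding unit by (simp add: power2_eq_square algebra_simps)
  finally have norm_x: "spatial_norm_sq x = (w$0 - 1) / (w$0 + 1)" using ne by simp
  define d where "d = 1 - spatial_norm_sq x"
  have d: "d = 2 / (w$0 + 1)" unfolding d_def norm_x using ne by (simp add: field_simps)
  then have "d \<noteq> 0" using ne by simp
  have column: "(scaled_boost x)$i$0 = d * w$i" for i
  proof (cases "i = 0")
    case True
    have "1 + spatial_norm_sq x = d * w$0" unfolding d norm_x using ne by (simp add: field_simps)
    then show ?thesis using True by (simp add: scaled_boost_def)
  next
    case False
    then show ?thesis unfolding d using ne by (simp add: scaled_boost_def x_def field_simps)
  qed
  define L where "L = (1 / d) *\<^sub>R scaled_boost x"
  have "transpose L ** minkowski ** L
      = ((1/d) * (1/d)) *\<^sub>R (transpose (scaled_boost x) ** minkowski ** scaled_boost x)"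
    unfolding L_def by (simp add: transpose_scalar matrix_scalar_ac scalar_matrix_assoc[symmetric])
  also have "\<dots> = minkowski"
    unfolding scaled_boost_lorentz d_def[symmetric] using \<open>d \<noteq> 0\<close> by (simp add: power2_eq_square)
  finally show ?thesis using that column \<open>d \<noteq> 0\<close> unfolding L_def by simp
qed

lemma adapted_frame:
  assumes "lorentzian g" and unit: "(\<Sum>k\<in>UNIV. lower g u k * u k) = -1"
  obtains Q k where "transpose Q ** g ** Q = minkowski" "\<And>s. Q$s$0 = k * u s"
proof -
  obtain P where P: "transpose P ** g ** P = minkowski"
    using assms(1) unfolding lorentzian_def by blast
  then obtain Pi where "P ** Pi = mat 1"
    using congruent_minkowski_invertible invertible_right_inverse by blast
  define uv :: "real^4" where "uv = (\<chi> s. u s)"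
  define w0 where "w0 = Pi *v uv"
  have Pw0: "P *v w0 = uv" unfolding w0_def using \<open>P ** Pi = mat 1\<close>
    by (simp add: matrix_vector_mul_assoc)
  have "quad_form minkowski w0 = quad_form g uv" using quad_form_congruence[of P g w0] P Pw0 by simp
  also have "\<dots> = -1"
    using unit unfolding quad_form_sum lower_def uv_def
    by (simp add: sum_distrib_left sum_distrib_right mult_ac)
  finally have w0_unit: "(w0$1)^2 + (w0$2)^2 + (w0$3)^2 = (w0$0)^2 - 1"
    by (simp add: quad_form_sum sum_UNIV_4 minkowski_def power2_eq_square)
  define k :: real where "k = (if w0$0 > 0 then 1 else -1)"
  define w where "w = k *s w0"
  have "k^2 = 1" by (simp add: k_def)
  then have "(w$1)^2 + (w$2)^2 + (w$3)^2 = (w$0)^2 - 1"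
    using w0_unit unfolding w_def by (simp add: power_mult_distrib algebra_simps)
  moreover have "w$0 > 0"
  proof -
    have "(w0$0)^2 \<ge> 1" using w0_unit by (smt (verit) zero_le_power2)
    then have "w0$0 \<noteq> 0" by auto
    then show ?thesis unfolding w_def k_def by auto
  qed
  ultimately obtain L where L: "transpose L ** minkowski ** L = minkowski" "\<And>i. L$i$0 = w$i"
    using lorentz_transformation_to_timelike_unit by blast
  define Q where "Q = P ** L"
  have "transpose Q ** g ** Q = transpose L ** (transpose P ** g ** P) ** L"
    unfolding Q_def by (simp add: matrix_transpose_mul matrix_mul_assoc)
  then have "transpose Q ** g ** Q = minkowski" using P L(1) by simp
  moreover have "Q$s$0 = k * u s" for s
  proof -
    have "Q$s$0 = (\<Sum>j\<in>UNIV. P$s$j * w$j)"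
      unfolding Q_def matrix_matrix_mult_def by (simp add: L(2))
    also have "\<dots> = k * (P *v w0)$s"
      unfolding w_def by (simp add: matrix_vector_mult_def sum_distrib_left mult_ac)
    finally show ?thesis using Pw0 unfolding uv_def by simp
  qed
  ultimately show ?thesis using that by blast
qed

section \<open>Pair-symmetric tensors\<close>

text \<open>The Riemann symmetries without the first Bianchi identity, which the argument never uses.\<close>
definition curvature_symmetric :: "('n \<Rightarrow> 'n \<Rightarrow> 'n \<Rightarrow> 'n \<Rightarrow> real) \<Rightarrow> bool" where
  "curvature_symmetric T \<longleftrightarrow>
     (\<forall>a b c d. T a b c d = - T b a c d) \<and>
     (\<forall>a b c d. T a b c d = - T a b d c) \<and>
     (\<forall>a b c d. T a b c d = T c d a b)"

definition traceless :: "real^'n^'n \<Rightarrow> ('n \<Rightarrow> 'n \<Rightarrow> 'n \<Rightarrow> 'n \<Rightarrow> real) \<Rightarrow> bool" where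
  "traceless g T \<longleftrightarrow> (\<forall>b d. (\<Sum>a\<in>UNIV. \<Sum>c\<in>UNIV. matrix_inv g $a$c * T a b c d) = 0)"

lemma weyl_tensor_curvature_symmetric: "weyl_tensor g C \<Longrightarrow> curvature_symmetric C"
  unfolding weyl_tensor_def curvature_symmetric_def by blast

lemma weyl_tensor_traceless: "weyl_tensor g C \<Longrightarrow> traceless g C"
  unfolding weyl_tensor_def traceless_def by blast

lemma curvature_symmetricD:
  assumes "curvature_symmetric T"
  shows "T a b c d = - T b a c d" "T a b c d = - T a b d c" "T a b c d = T c d a b"
    "T a b c d = T b a d c"
  using assms unfolding curvature_symmetric_def by (metis minus_minus)+

definition tensor4_transform ::
  "real^'m^'n \<Rightarrow> ('n \<Rightarrow> 'n \<Rightarrow> 'n \<Rightarrow> 'n \<Rightarrow> real) \<Rightarrow> 'm \<Rightarrow> 'm \<Rightarrow> 'm \<Rightarrow> 'm \<Rightarrow> real" where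
  "tensor4_transform Q T a b c d =
     (\<Sum>x\<in>UNIV. \<Sum>y\<in>UNIV. \<Sum>z\<in>UNIV. \<Sum>w\<in>UNIV. T x y z w * Q$x$a * Q$y$b * Q$z$c * Q$w$d)"

lemma tensor4_transform_swap_first:
  "tensor4_transform Q T b a c d = tensor4_transform Q (\<lambda>x y z w. T y x z w) a b c d"
  unfolding tensor4_transform_def by (rule trans[OF sum.swap]) (intro sum.cong refl, simp add: mult_ac)

lemma tensor4_transform_swap_last:
  "tensor4_transform Q T a b d c = tensor4_transform Q (\<lambda>x y z w. T x y w z) a b c d"
  unfolding tensor4_transform_def by (rule trans[OF sum_swap_last]) (intro sum.cong refl, simp add: mult_ac)

lemma tensor4_transform_swap_pairs:
  "tensor4_transform Q T c d a b = tensor4_transform Q (\<lambda>x y z w. T z w x y) a b c d"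
  unfolding tensor4_transform_def by (rule trans[OF sum_swap_pairs]) (intro sum.cong refl, simp add: mult_ac)

lemma tensor4_transform_uminus:
  "tensor4_transform Q (\<lambda>x y z w. - T x y z w) a b c d = - tensor4_transform Q T a b c d"
  unfolding tensor4_transform_def by (simp add: sum_negf)

lemma curvature_symmetric_tensor4_transform:
  assumes "curvature_symmetric T"
  shows "curvature_symmetric (tensor4_transform Q T)"
proof -
  have swap_first: "(\<lambda>x y z w. T y x z w) = (\<lambda>x y z w. - T x y z w)"
    and swap_last: "(\<lambda>x y z w. T x y w z) = (\<lambda>x y z w. - T x y z w)"
    and swap_pairs: "(\<lambda>x y z w. T z w x y) = T"
    using curvature_symmetricD[OF assms] by (intro ext; metis)+
  show ?thesis unfolding curvature_symmetric_def
  proof (intro conjI allI)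
    fix a b c d
    show "tensor4_transform Q T a b c d = - tensor4_transform Q T b a c d"
      unfolding tensor4_transform_swap_first[of Q T a b] swap_first tensor4_transform_uminus by simp
    show "tensor4_transform Q T a b c d = - tensor4_transform Q T a b d c"
      unfolding tensor4_transform_swap_last[of Q T a b c d] swap_last tensor4_transform_uminus by simp
    show "tensor4_transform Q T a b c d = tensor4_transform Q T c d a b"
      unfolding tensor4_transform_swap_pairs[of Q T a b c d] swap_pairs ..
  qed
qed

lemma trace_tensor4_transform:
  "(\<Sum>a\<in>UNIV. \<Sum>c\<in>UNIV. H$a$c * tensor4_transform Q T a b c d)
   = (\<Sum>y\<in>UNIV. \<Sum>w\<in>UNIV. Q$y$b * Q$w$d *
        (\<Sum>x\<in>UNIV. \<Sum>z\<in>UNIV. (Q ** H ** transpose Q)$x$z * T x y z w))"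
proof -
  define G where "G x z = (\<Sum>y\<in>UNIV. \<Sum>w\<in>UNIV. T x y z w * Q$y$b * Q$w$d)" for x z
  have "tensor4_transform Q T a b c d = (\<Sum>x\<in>UNIV. \<Sum>z\<in>UNIV. Q$x$a * Q$z$c * G x z)" for a c
    unfolding tensor4_transform_def G_def
    by (subst sum_swap_middle) (simp add: sum_distrib_left mult_ac)
  then have "(\<Sum>a\<in>UNIV. \<Sum>c\<in>UNIV. H$a$c * tensor4_transform Q T a b c d)
      = (\<Sum>a\<in>UNIV. \<Sum>c\<in>UNIV. \<Sum>x\<in>UNIV. \<Sum>z\<in>UNIV. Q$x$a * H$a$c * Q$z$c * G x z)"
    by (simp add: sum_distrib_left mult_ac)
  also have "\<dots> = (\<Sum>x\<in>UNIV. \<Sum>z\<in>UNIV. \<Sum>a\<in>UNIV. \<Sum>c\<in>UNIV. Q$x$a * H$a$c * Q$z$c * G x z)"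
    by (rule sum_swap_pairs)
  also have "\<dots> = (\<Sum>x\<in>UNIV. \<Sum>z\<in>UNIV. (Q ** H ** transpose Q)$x$z * G x z)"
  proof -
    have "(\<Sum>a\<in>UNIV. \<Sum>c\<in>UNIV. Q$x$a * H$a$c * Q$z$c) = (Q ** H ** transpose Q)$x$z" for x z
      by (simp add: matrix_matrix_mult_def transpose_def sum_distrib_right) (rule sum.swap)
    then show ?thesis by (simp add: sum_distrib_right[symmetric])
  qed
  also have "\<dots> = (\<Sum>x\<in>UNIV. \<Sum>z\<in>UNIV. \<Sum>y\<in>UNIV. \<Sum>w\<in>UNIV.
      Q$y$b * Q$w$d * ((Q ** H ** transpose Q)$x$z * T x y z w))"
    unfolding G_def by (simp add: sum_distrib_left mult_ac)
  also have "\<dots> = (\<Sum>y\<in>UNIV. \<Sum>w\<in>UNIV. Q$y$b * Q$w$d *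
        (\<Sum>x\<in>UNIV. \<Sum>z\<in>UNIV. (Q ** H ** transpose Q)$x$z * T x y z w))"
    by (subst sum_swap_pairs) (simp add: sum_distrib_left)
  finally show ?thesis .
qed

lemma vector_matrix_mult_invertible_eq_0:
  fixes Q :: "real^'n^'n"
  assumes "invertible Q" and "\<And>a. (\<Sum>x\<in>UNIV. Q$x$a * f x) = 0"
  shows "f x = 0"
proof -
  obtain Qi where "Q ** Qi = mat 1" using assms(1) unfolding invertible_def by blast
  define fv :: "real^'n" where "fv = (\<chi> x. f x)"
  have "fv v* Q = 0"
    using assms(2) unfolding vec_eq_iff vector_matrix_mult_def fv_def by (simp add: mult_ac)
  then have "(fv v* Q) v* Qi = 0" by (simp add: vec_eq_iff vector_matrix_mult_def)
  then have "fv = 0" using \<open>Q ** Qi = mat 1\<close> by (simp add: vector_matrix_mul_assoc)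
  then show ?thesis unfolding fv_def vec_eq_iff by simp
qed

lemma tensor4_transform_eq_0:
  fixes Q :: "real^'n^'n"
  assumes "invertible Q" and "\<And>a b c d. tensor4_transform Q T a b c d = 0"
  shows "T a b c d = 0"
proof -
  have "(\<Sum>x\<in>UNIV. Q$x$a * (\<Sum>y\<in>UNIV. Q$y$b * (\<Sum>z\<in>UNIV. Q$z$c *
          (\<Sum>w\<in>UNIV. Q$w$d * T x y z w)))) = 0" for a b c d
    using assms(2)[of a b c d] unfolding tensor4_transform_def
    by (simp add: sum_distrib_left mult_ac)
  then have "(\<Sum>y\<in>UNIV. Q$y$b * (\<Sum>z\<in>UNIV. Q$z$c * (\<Sum>w\<in>UNIV. Q$w$d * T x y z w))) = 0"
    for x b c d
    by (rule vector_matrix_mult_invertible_eq_0[OF assms(1)])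
  then have "(\<Sum>z\<in>UNIV. Q$z$c * (\<Sum>w\<in>UNIV. Q$w$d * T x y z w)) = 0" for x y c d
    by (rule vector_matrix_mult_invertible_eq_0[OF assms(1)])
  then have "(\<Sum>w\<in>UNIV. Q$w$d * T x y z w) = 0" for x y z d
    by (rule vector_matrix_mult_invertible_eq_0[OF assms(1)])
  then show ?thesis by (rule vector_matrix_mult_invertible_eq_0[OF assms(1)])
qed

text \<open>In dimension 3 the six trace equations T^a_bad = 0 determine the six independent
  components of a pair-symmetric tensor.\<close>
lemma spatial_traceless_vanishes:
  fixes X :: "4 \<Rightarrow> 4 \<Rightarrow> 4 \<Rightarrow> 4 \<Rightarrow> real"
  assumes sym: "curvature_symmetric X"
    and spatial: "\<And>a b c. X a b c 0 = 0"
    and trace: "\<And>b d. (\<Sum>a\<in>UNIV. \<Sum>c\<in>UNIV. minkowski$a$c * X a b c d) = 0"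
  shows "X a b c d = 0"
proof -
  note a1 = curvature_symmetricD(1)[OF sym] and a2 = curvature_symmetricD(2)[OF sym]
    and ps = curvature_symmetricD(3)[OF sym]
  have z3: "X a b 0 d = 0" for a b d using a2[of a b 0 d] spatial[of a b d] by simp
  have z1: "X 0 b c d = 0" for b c d using ps[of 0 b c d] z3[of c d b] by simp
  have z2: "X a 0 c d = 0" for a c d using a1[of a 0 c d] z1[of a c d] by simp
  have d1: "X a a c d = 0" for a c d using a1[of a a c d] by simp
  have d2: "X a b c c = 0" for a b c using a2[of a b c c] by simp
  have nr: "X 1 0 c d = - X 0 1 c d" "X c d 1 0 = - X c d 0 1"
    "X 2 0 c d = - X 0 2 c d" "X c d 2 0 = - X c d 0 2"
    "X 3 0 c d = - X 0 3 c d" "X c d 3 0 = - X c d 0 3"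
    "X 2 1 c d = - X 1 2 c d" "X c d 2 1 = - X c d 1 2"
    "X 3 1 c d = - X 1 3 c d" "X c d 3 1 = - X c d 1 3"
    "X 3 2 c d = - X 2 3 c d" "X c d 3 2 = - X c d 2 3"
    "X 0 2 0 1 = X 0 1 0 2" "X 0 3 0 1 = X 0 1 0 3" "X 0 3 0 2 = X 0 2 0 3"
    "X 1 2 0 1 = X 0 1 1 2" "X 1 2 0 2 = X 0 2 1 2" "X 1 2 0 3 = X 0 3 1 2"
    "X 1 3 0 1 = X 0 1 1 3" "X 1 3 0 2 = X 0 2 1 3" "X 1 3 0 3 = X 0 3 1 3"
    "X 1 3 1 2 = X 1 2 1 3" "X 2 3 0 1 = X 0 1 2 3" "X 2 3 0 2 = X 0 2 2 3"
    "X 2 3 0 3 = X 0 3 2 3" "X 2 3 1 2 = X 1 2 2 3" "X 2 3 1 3 = X 1 3 2 3" for c d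
    by (rule a1 a2 ps)+
  have tr: "X 1 b 1 d + X 2 b 2 d + X 3 b 3 d = 0" for b d
    using trace[of b d] z1[of b 0 d] by (simp add: sum_UNIV_4 minkowski_def)
  have "X 1 2 1 2 + X 1 3 1 3 = 0" "X 1 2 1 2 + X 2 3 2 3 = 0" "X 1 3 1 3 + X 2 3 2 3 = 0"
    using tr[of 1 1] tr[of 2 2] tr[of 3 3] by (simp_all add: nr d1 d2)
  then have diag: "X 1 2 1 2 = 0" "X 1 3 1 3 = 0" "X 2 3 2 3 = 0" by linarith+
  have off_diag: "X 1 3 2 3 = 0" "X 1 2 2 3 = 0" "X 1 2 1 3 = 0"
    using tr[of 1 2] tr[of 1 3] tr[of 2 3] by (simp_all add: nr d1 d2)
  show ?thesis
    using UNIV_4_cases[of a] UNIV_4_cases[of b] UNIV_4_cases[of c] UNIV_4_cases[of d]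
    by (elim disjE) (simp_all add: nr d1 d2 z1 z2 z3 spatial diag off_diag)
qed

lemma transverse_traceless_vanishes:
  assumes "lorentzian g" and "(\<Sum>k\<in>UNIV. lower g u k * u k) = -1"
    and "curvature_symmetric D" and "traceless g D"
    and transverse: "\<And>a b c. (\<Sum>d\<in>UNIV. D a b c d * u d) = 0"
  shows "D a b c d = 0"
proof -
  obtain Q k where QgQ: "transpose Q ** g ** Q = minkowski" and column: "\<And>s. Q$s$0 = k * u s"
    using adapted_frame[OF assms(1,2)] by blast
  define X where "X = tensor4_transform Q D"
  have "X a b c 0 = 0" for a b c
  proof -
    have "X a b c 0 = (\<Sum>x\<in>UNIV. \<Sum>y\<in>UNIV. \<Sum>z\<in>UNIV.
        Q$x$a * Q$y$b * Q$z$c * k * (\<Sum>w\<in>UNIV. D x y z w * u w))"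
      unfolding X_def tensor4_transform_def column
      by (simp add: sum_distrib_left mult_ac)
    then show ?thesis using transverse by simp
  qed
  moreover have "(\<Sum>a\<in>UNIV. \<Sum>c\<in>UNIV. minkowski$a$c * X a b c d) = 0" for b d
    using \<open>traceless g D\<close> unfolding X_def trace_tensor4_transform
      congruent_minkowski_matrix_inv(1)[OF QgQ, symmetric] traceless_def by simp
  ultimately have "X a b c d = 0" for a b c d
    using spatial_traceless_vanishes curvature_symmetric_tensor4_transform[OF assms(3)]
    unfolding X_def by blast
  then show ?thesis
    using tensor4_transform_eq_0 congruent_minkowski_invertible[OF QgQ] unfolding X_def by blast
qed

lemma curvature_symmetric_diff:
  assumes "curvature_symmetric S" and "curvature_symmetric T"
  shows "curvature_symmetric (\<lambda>a b c d. S a b c d - T a b c d)"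
  unfolding curvature_symmetric_def
proof (intro conjI allI)
  fix a b c d
  note S = curvature_symmetricD[OF assms(1), of a b c d]
    and T = curvature_symmetricD[OF assms(2), of a b c d]
  show "S a b c d - T a b c d = - (S b a c d - T b a c d)" using S(1) T(1) by simp
  show "S a b c d - T a b c d = - (S a b d c - T a b d c)" using S(2) T(2) by simp
  show "S a b c d - T a b c d = S c d a b - T c d a b" using S(3) T(3) by simp
qed

lemma traceless_diff:
  "traceless g S \<Longrightarrow> traceless g T \<Longrightarrow> traceless g (\<lambda>a b c d. S a b c d - T a b c d)"
  unfolding traceless_def by (simp add: right_diff_distrib sum_subtractf)

section \<open>The electric part of the Weyl tensor\<close>

lemma electric_symmetric:
  assumes "curvature_symmetric C"
  shows "electric C u a d = electric C u d a"
proof -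
  have swap: "C d b c a = C a c b d" for b c
    using curvature_symmetricD(3,4)[OF assms] by metis
  have "electric C u d a = (\<Sum>b\<in>UNIV. \<Sum>c\<in>UNIV. u b * u c * C a c b d)"
    unfolding electric_def by (simp add: swap)
  also have "\<dots> = (\<Sum>c\<in>UNIV. \<Sum>b\<in>UNIV. u b * u c * C a c b d)" by (rule sum.swap)
  also have "\<dots> = electric C u a d"
    unfolding electric_def by (intro sum.cong refl) (simp add: mult_ac)
  finally show ?thesis by simp
qed

lemma electric_transverse:
  assumes "curvature_symmetric C"
  shows "(\<Sum>a\<in>UNIV. u a * electric C u a d) = 0"
proof -
  have "(\<Sum>a\<in>UNIV. u a * electric C u a d)
      = (\<Sum>a\<in>UNIV. \<Sum>b\<in>UNIV. u a * u b * (\<Sum>c\<in>UNIV. u c * C a b c d))"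
    unfolding electric_def by (simp only: sum_distrib_left) (intro sum.cong refl, simp add: mult_ac)
  also have "\<dots> = 0"
  proof (rule sum_antisymmetric_quadratic)
    fix a b
    show "(\<Sum>c\<in>UNIV. u c * C a b c d) = - (\<Sum>c\<in>UNIV. u c * C b a c d)"
      using curvature_symmetricD(1)[OF assms, of a b _ d] by (simp add: sum_negf[symmetric])
  qed
  finally show ?thesis .
qed

lemma electric_traceless:
  assumes "curvature_symmetric C" and "traceless g C"
  shows "(\<Sum>a\<in>UNIV. \<Sum>c\<in>UNIV. matrix_inv g $a$c * electric C u a c) = 0"
proof -
  have "(\<Sum>a\<in>UNIV. \<Sum>c\<in>UNIV. matrix_inv g $a$c * electric C u a c)
      = (\<Sum>a\<in>UNIV. \<Sum>c\<in>UNIV. \<Sum>x\<in>UNIV. \<Sum>y\<in>UNIV. u x * u y * (matrix_inv g $a$c * C a x y c))"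
    unfolding electric_def by (simp only: sum_distrib_left) (intro sum.cong refl, simp add: mult_ac)
  also have "\<dots> = (\<Sum>x\<in>UNIV. \<Sum>y\<in>UNIV. u x * u y *
      (\<Sum>a\<in>UNIV. \<Sum>c\<in>UNIV. matrix_inv g $a$c * C a x y c))"
    by (subst sum_swap_pairs) (simp add: sum_distrib_left)
  also have "\<dots> = 0"
  proof -
    have "(\<Sum>a\<in>UNIV. \<Sum>c\<in>UNIV. matrix_inv g $a$c * C a x y c)
        = - (\<Sum>a\<in>UNIV. \<Sum>c\<in>UNIV. matrix_inv g $a$c * C a x c y)" for x y
      using curvature_symmetricD(2)[OF assms(1), of _ x y] by (simp add: sum_negf[symmetric])
    then show ?thesis using assms(2) unfolding traceless_def by simp
  qed
  finally show ?thesis .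
qed

lemma weyl_compatible_contraction:
  assumes "curvature_symmetric C" and "weyl_compatible g C u"
    and unit: "(\<Sum>k\<in>UNIV. lower g u k * u k) = -1"
  shows "(\<Sum>m\<in>UNIV. C j k l m * u m) = lower g u k * electric C u j l - lower g u j * electric C u k l"
proof -
  let ?v = "lower g u"
  have first: "(\<Sum>i\<in>UNIV. \<Sum>m\<in>UNIV. u i * u m * C k i l m) = - electric C u k l"
    unfolding electric_def using curvature_symmetricD(2)[OF assms(1), of k _ l] by (simp add: sum_negf)
  have second: "(\<Sum>i\<in>UNIV. \<Sum>m\<in>UNIV. u i * u m * C i j l m) = electric C u j l"
    unfolding electric_def using curvature_symmetricD(4)[OF assms(1), of _ j l] by simp
  have "0 = (\<Sum>i\<in>UNIV. u i *
      (\<Sum>m\<in>UNIV. (?v i * C j k l m + ?v j * C k i l m + ?v k * C i j l m) * u m))"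
    using assms(2) unfolding weyl_compatible_def by simp
  also have "\<dots> = (\<Sum>i\<in>UNIV. ?v i * u i) * (\<Sum>m\<in>UNIV. C j k l m * u m)
      + ?v j * (\<Sum>i\<in>UNIV. \<Sum>m\<in>UNIV. u i * u m * C k i l m)
      + ?v k * (\<Sum>i\<in>UNIV. \<Sum>m\<in>UNIV. u i * u m * C i j l m)"
    by (simp add: sum_UNIV_4 algebra_simps)
  finally show ?thesis unfolding first second unit by simp
qed

definition electric_weyl ::
  "real^4^4 \<Rightarrow> (4 \<Rightarrow> real) \<Rightarrow> (4 \<Rightarrow> 4 \<Rightarrow> real) \<Rightarrow> 4 \<Rightarrow> 4 \<Rightarrow> 4 \<Rightarrow> 4 \<Rightarrow> real" where
  "electric_weyl g v E a b c d =
     2 * (v a * v d * E b c - v a * v c * E b d + v b * v c * E a d - v b * v d * E a c)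
     + g$a$d * E b c - g$a$c * E b d + g$b$c * E a d - g$b$d * E a c"

lemma curvature_symmetric_electric_weyl:
  assumes "\<And>a b. g$a$b = g$b$a" and "\<And>a b. E a b = E b a"
  shows "curvature_symmetric (electric_weyl g v E)"
  unfolding curvature_symmetric_def electric_weyl_def
proof (intro conjI allI)
  fix a b c d
  show "2 * (v a * v d * E b c - v a * v c * E b d + v b * v c * E a d - v b * v d * E a c)
     + g$a$d * E b c - g$a$c * E b d + g$b$c * E a d - g$b$d * E a c
   = 2 * (v c * v b * E d a - v c * v a * E d b + v d * v a * E c b - v d * v b * E c a)
     + g$c$b * E d a - g$c$a * E d b + g$d$a * E c b - g$d$b * E c a"
    using assms(1)[of a b] assms(1)[of a c] assms(1)[of a d] assms(1)[of b c]
      assms(1)[of b d] assms(1)[of c d] assms(2)[of a b] assms(2)[of a c] assms(2)[of a d]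
      assms(2)[of b c] assms(2)[of b d] assms(2)[of c d]
    by (simp add: algebra_simps)
qed (simp_all add: algebra_simps)

lemma electric_weyl_contraction:
  assumes unit: "(\<Sum>k\<in>UNIV. lower g u k * u k) = -1"
    and transverse: "\<And>a. (\<Sum>d\<in>UNIV. E a d * u d) = 0"
  shows "(\<Sum>d\<in>UNIV. electric_weyl g (lower g u) E a b c d * u d)
       = lower g u b * E a c - lower g u a * E b c"
proof -
  let ?v = "lower g u"
  have "(\<Sum>d\<in>UNIV. electric_weyl g ?v E a b c d * u d) =
      2 * (?v a * E b c * (\<Sum>d\<in>UNIV. ?v d * u d) - ?v a * ?v c * (\<Sum>d\<in>UNIV. E b d * u d)
        + ?v b * ?v c * (\<Sum>d\<in>UNIV. E a d * u d) - ?v b * E a c * (\<Sum>d\<in>UNIV. ?v d * u d))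
      + E b c * (\<Sum>d\<in>UNIV. g$a$d * u d) - g$a$c * (\<Sum>d\<in>UNIV. E b d * u d)
      + g$b$c * (\<Sum>d\<in>UNIV. E a d * u d) - E a c * (\<Sum>d\<in>UNIV. g$b$d * u d)"
    unfolding electric_weyl_def by (simp add: sum_UNIV_4 algebra_simps)
  also have "\<dots> = ?v b * E a c - ?v a * E b c"
    unfolding unit transverse by (simp add: lower_def algebra_simps)
  finally show ?thesis .
qed

lemma traceless_electric_weyl:
  assumes g: "lorentzian g" and unit: "(\<Sum>k\<in>UNIV. lower g u k * u k) = -1"
    and symmetric: "\<And>a b. E a b = E b a"
    and transverse: "\<And>d. (\<Sum>a\<in>UNIV. u a * E a d) = 0"
    and trace: "(\<Sum>a\<in>UNIV. \<Sum>c\<in>UNIV. matrix_inv g $a$c * E a c) = 0"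
  shows "traceless g (electric_weyl g (lower g u) E)"
  unfolding traceless_def
proof (intro allI)
  fix b d
  let ?h = "matrix_inv g" and ?v = "lower g u"
  have h_sym: "?h$a$c = ?h$c$a" for a c by (rule lorentzian_matrix_inv_symmetric[OF g])
  have h_g: "(\<Sum>c\<in>UNIV. ?h$a$c * g$b$c) = (if a = b then 1 else 0)" for a b
    using lorentzian_matrix_inv_mult[OF g, of a b] by (simp add: lorentzian_symmetric[OF g, of _ b])
  have raise: "(\<Sum>c\<in>UNIV. ?h$a$c * ?v c) = u a" for a by (rule lorentzian_raise_lower[OF g])
  define T1 where "T1 = (\<Sum>a\<in>UNIV. \<Sum>c\<in>UNIV. ?h$a$c * ?v a * E b c)"
  define T2 where "T2 = (\<Sum>a\<in>UNIV. \<Sum>c\<in>UNIV. ?h$a$c * ?v a * ?v c)"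
  define T3 where "T3 = (\<Sum>a\<in>UNIV. \<Sum>c\<in>UNIV. ?h$a$c * ?v c * E a d)"
  define T4 where "T4 = (\<Sum>a\<in>UNIV. \<Sum>c\<in>UNIV. ?h$a$c * E a c)"
  define T5 where "T5 = (\<Sum>a\<in>UNIV. \<Sum>c\<in>UNIV. ?h$a$c * g$a$d * E b c)"
  define T6 where "T6 = (\<Sum>a\<in>UNIV. \<Sum>c\<in>UNIV. ?h$a$c * g$a$c)"
  define T7 where "T7 = (\<Sum>a\<in>UNIV. \<Sum>c\<in>UNIV. ?h$a$c * g$b$c * E a d)"
  have expand: "(\<Sum>a\<in>UNIV. \<Sum>c\<in>UNIV. ?h$a$c * electric_weyl g ?v E a b c d) =
      2 * (?v d * T1 - E b d * T2 + ?v b * T3 - ?v b * ?v d * T4) + T5 - E b d * T6 + T7 - g$b$d * T4"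
    unfolding electric_weyl_def T1_def T2_def T3_def T4_def T5_def T6_def T7_def
    by (simp add: sum_UNIV_4 algebra_simps)
  have "T1 = (\<Sum>c\<in>UNIV. (\<Sum>a\<in>UNIV. ?h$c$a * ?v a) * E c b)"
    unfolding T1_def by (subst sum.swap) (simp add: sum_distrib_right h_sym symmetric[of b])
  then have "T1 = 0" using transverse by (simp add: raise)
  moreover have "T2 = -1"
  proof -
    have "T2 = (\<Sum>a\<in>UNIV. ?v a * (\<Sum>c\<in>UNIV. ?h$a$c * ?v c))"
      unfolding T2_def by (simp add: sum_distrib_left mult_ac)
    then show ?thesis using unit by (simp add: raise)
  qed
  moreover have "T3 = 0"
    unfolding T3_def using transverse by (simp add: sum_distrib_right[symmetric] raise)
  moreover have "T4 = 0" unfolding T4_def by (rule trace)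
  moreover have "T5 = E b d"
  proof -
    have "T5 = (\<Sum>c\<in>UNIV. (\<Sum>a\<in>UNIV. ?h$c$a * g$d$a) * E b c)"
      unfolding T5_def by (subst sum.swap) (simp add: sum_distrib_right h_sym lorentzian_symmetric[OF g, of _ d])
    then show ?thesis by (simp add: h_g sum_delta_right)
  qed
  moreover have "T6 = 4" unfolding T6_def using h_g by (simp add: lorentzian_symmetric[OF g, of _ _])
  moreover have "T7 = E b d"
    unfolding T7_def by (simp add: sum_distrib_right[symmetric] h_g sum_delta_right)
  ultimately show "(\<Sum>a\<in>UNIV. \<Sum>c\<in>UNIV. ?h$a$c * electric_weyl g ?v E a b c d) = 0"
    unfolding expand by simp
qed

lemma weyl_eq_electric_weyl:
  assumes g: "lorentzian g" and C: "weyl_tensor g C"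
    and unit: "(\<Sum>k\<in>UNIV. lower g u k * u k) = -1" and compatible: "weyl_compatible g C u"
  shows "C a b c d = electric_weyl g (lower g u) (electric C u) a b c d"
proof -
  let ?E = "electric C u" and ?R = "electric_weyl g (lower g u) (electric C u)"
  have C_sym: "curvature_symmetric C" using C by (rule weyl_tensor_curvature_symmetric)
  have E_sym: "?E a b = ?E b a" for a b by (rule electric_symmetric[OF C_sym])
  have "(\<Sum>d\<in>UNIV. ?E a d * u d) = 0" for a
    using electric_transverse[OF C_sym, of u a] by (simp add: E_sym mult.commute)
  then have "(\<Sum>d\<in>UNIV. (C a b c d - ?R a b c d) * u d) = 0" for a b c
    using weyl_compatible_contraction[OF C_sym compatible unit, of a b c]
      electric_weyl_contraction[OF unit, of ?E a b c]
    by (simp add: left_diff_distrib sum_subtractf)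
  moreover have "curvature_symmetric (\<lambda>a b c d. C a b c d - ?R a b c d)"
    by (rule curvature_symmetric_diff[OF C_sym
          curvature_symmetric_electric_weyl[OF lorentzian_symmetric[OF g] E_sym]])
  moreover have "traceless g (\<lambda>a b c d. C a b c d - ?R a b c d)"
    by (rule traceless_diff[OF weyl_tensor_traceless[OF C] traceless_electric_weyl[OF g unit E_sym
          electric_transverse[OF C_sym] electric_traceless[OF C_sym weyl_tensor_traceless[OF C]]]])
  ultimately have "C a b c d - ?R a b c d = 0"
    by (rule transverse_traceless_vanishes[OF g unit, rotated 2])
  then show ?thesis by simp
qed

section \<open>The square of the Weyl tensor\<close>

lemma sq4_eq_contraction_raised:
  assumes "lorentzian g"
  shows "sq4 g T = (\<Sum>a\<in>UNIV. \<Sum>b\<in>UNIV. \<Sum>c\<in>UNIV. \<Sum>d\<in>UNIV.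
    T a b c d * tensor4_transform (matrix_inv g) T a b c d)"
  unfolding sq4_def tensor4_transform_def
  by (simp only: sum_distrib_left)
    (intro sum.cong refl, simp add: lorentzian_matrix_inv_symmetric[OF assms] mult_ac)

lemma sum_product_tensor4_transform:
  "(\<Sum>a\<in>UNIV. \<Sum>b\<in>UNIV. \<Sum>c\<in>UNIV. \<Sum>d\<in>UNIV. \<alpha> a d * \<beta> b c * tensor4_transform G T a b c d) =
   (\<Sum>x\<in>UNIV. \<Sum>y\<in>UNIV. \<Sum>z\<in>UNIV. \<Sum>w\<in>UNIV. T x y z w
      * (\<Sum>a\<in>UNIV. \<Sum>d\<in>UNIV. \<alpha> a d * G$x$a * G$w$d)
      * (\<Sum>b\<in>UNIV. \<Sum>c\<in>UNIV. \<beta> b c * G$y$b * G$z$c))"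
proof -
  have "(\<Sum>a\<in>UNIV. \<Sum>b\<in>UNIV. \<Sum>c\<in>UNIV. \<Sum>d\<in>UNIV. \<alpha> a d * \<beta> b c * tensor4_transform G T a b c d) =
    (\<Sum>a\<in>UNIV. \<Sum>b\<in>UNIV. \<Sum>c\<in>UNIV. \<Sum>d\<in>UNIV. \<Sum>x\<in>UNIV. \<Sum>y\<in>UNIV. \<Sum>z\<in>UNIV. \<Sum>w\<in>UNIV.
       \<alpha> a d * \<beta> b c * (T x y z w * G$x$a * G$y$b * G$z$c * G$w$d))"
    unfolding tensor4_transform_def by (simp only: sum_distrib_left)
  also have "\<dots> = (\<Sum>x\<in>UNIV. \<Sum>y\<in>UNIV. \<Sum>z\<in>UNIV. \<Sum>w\<in>UNIV. \<Sum>a\<in>UNIV. \<Sum>b\<in>UNIV. \<Sum>c\<in>UNIV. \<Sum>d\<in>UNIV.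
       \<alpha> a d * \<beta> b c * (T x y z w * G$x$a * G$y$b * G$z$c * G$w$d))"
    by (rule sum_swap_quadruples)
  also have "\<dots> = (\<Sum>x\<in>UNIV. \<Sum>y\<in>UNIV. \<Sum>z\<in>UNIV. \<Sum>w\<in>UNIV. T x y z w
      * (\<Sum>a\<in>UNIV. \<Sum>d\<in>UNIV. \<alpha> a d * G$x$a * G$w$d)
      * (\<Sum>b\<in>UNIV. \<Sum>c\<in>UNIV. \<beta> b c * G$y$b * G$z$c))"
    by (intro sum.cong refl, subst sum_swap_first_to_third, simp only: sum_distrib_left sum_distrib_right)
      (intro sum.cong refl, simp add: mult_ac)
  finally show ?thesis .
qed

lemma contraction_electric_term:
  assumes g: "lorentzian g" and C: "curvature_symmetric C"
  shows "(\<Sum>a\<in>UNIV. \<Sum>b\<in>UNIV. \<Sum>c\<in>UNIV. \<Sum>d\<in>UNIV. lower g u a * lower g u d * electric C u b c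
      * tensor4_transform (matrix_inv g) C a b c d) = sq2 g (electric C u)"
proof -
  let ?h = "matrix_inv g" and ?v = "lower g u" and ?E = "electric C u"
  define E_up where "E_up y z = (\<Sum>b\<in>UNIV. \<Sum>c\<in>UNIV. ?E b c * ?h$y$b * ?h$z$c)" for y z
  have u_up: "(\<Sum>a\<in>UNIV. \<Sum>d\<in>UNIV. ?v a * ?v d * ?h$x$a * ?h$w$d) = u x * u w" for x w
  proof -
    have "(\<Sum>a\<in>UNIV. \<Sum>d\<in>UNIV. ?v a * ?v d * ?h$x$a * ?h$w$d)
        = (\<Sum>a\<in>UNIV. ?h$x$a * ?v a) * (\<Sum>d\<in>UNIV. ?h$w$d * ?v d)"
      unfolding sum_product by (intro sum.cong refl) (simp add: mult_ac)
    then show ?thesis by (simp add: lorentzian_raise_lower[OF g])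
  qed
  have electric_swapped: "(\<Sum>x\<in>UNIV. \<Sum>w\<in>UNIV. u x * u w * C x y z w) = ?E y z" for y z
    unfolding electric_def using curvature_symmetricD(4)[OF C, of _ y z] by simp
  have "(\<Sum>a\<in>UNIV. \<Sum>b\<in>UNIV. \<Sum>c\<in>UNIV. \<Sum>d\<in>UNIV. ?v a * ?v d * ?E b c * tensor4_transform ?h C a b c d)
      = (\<Sum>x\<in>UNIV. \<Sum>y\<in>UNIV. \<Sum>z\<in>UNIV. \<Sum>w\<in>UNIV. C x y z w * (u x * u w) * E_up y z)"
    using sum_product_tensor4_transform[of "\<lambda>a d. ?v a * ?v d" ?E ?h C]
    by (simp add: u_up E_up_def)
  also have "\<dots> = (\<Sum>y\<in>UNIV. \<Sum>z\<in>UNIV. \<Sum>x\<in>UNIV. \<Sum>w\<in>UNIV. C x y z w * (u x * u w) * E_up y z)"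
    by (rule sum_swap_first_to_third)
  also have "\<dots> = (\<Sum>y\<in>UNIV. \<Sum>z\<in>UNIV. E_up y z * ?E y z)"
    unfolding electric_swapped[symmetric]
    by (simp only: sum_distrib_left) (intro sum.cong refl, simp add: mult_ac)
  also have "\<dots> = sq2 g ?E"
    unfolding sq2_def E_up_def
    by (subst sum_swap_pairs) (simp only: sum_distrib_right, intro sum.cong refl,
        simp add: lorentzian_matrix_inv_symmetric[OF g] mult_ac)
  finally show ?thesis .
qed

lemma contraction_metric_term:
  assumes g: "lorentzian g" and C: "curvature_symmetric C" "traceless g C"
  shows "(\<Sum>a\<in>UNIV. \<Sum>b\<in>UNIV. \<Sum>c\<in>UNIV. \<Sum>d\<in>UNIV. g$a$d * E b c
      * tensor4_transform (matrix_inv g) C a b c d) = 0"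
proof -
  let ?h = "matrix_inv g"
  define E_up where "E_up y z = (\<Sum>b\<in>UNIV. \<Sum>c\<in>UNIV. E b c * ?h$y$b * ?h$z$c)" for y z
  have g_up: "(\<Sum>a\<in>UNIV. \<Sum>d\<in>UNIV. g$a$d * ?h$x$a * ?h$w$d) = ?h$w$x" for x w
  proof -
    have "(\<Sum>a\<in>UNIV. \<Sum>d\<in>UNIV. g$a$d * ?h$x$a * ?h$w$d)
        = (\<Sum>d\<in>UNIV. (\<Sum>a\<in>UNIV. ?h$x$a * g$a$d) * ?h$w$d)"
      by (subst sum.swap) (simp only: sum_distrib_right, intro sum.cong refl, simp add: mult_ac)
    then show ?thesis by (simp add: lorentzian_matrix_inv_mult[OF g] sum_delta_left)
  qed
  have trace: "(\<Sum>x\<in>UNIV. \<Sum>w\<in>UNIV. ?h$w$x * C x y z w) = 0" for y z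
  proof -
    have "(\<Sum>x\<in>UNIV. \<Sum>w\<in>UNIV. ?h$w$x * C x y z w) = - (\<Sum>x\<in>UNIV. \<Sum>w\<in>UNIV. ?h$x$w * C x y w z)"
      using curvature_symmetricD(2)[OF C(1), of _ y z]
      by (simp add: lorentzian_matrix_inv_symmetric[OF g] sum_negf[symmetric])
    then show ?thesis using C(2) unfolding traceless_def by simp
  qed
  have "(\<Sum>a\<in>UNIV. \<Sum>b\<in>UNIV. \<Sum>c\<in>UNIV. \<Sum>d\<in>UNIV. g$a$d * E b c * tensor4_transform ?h C a b c d)
      = (\<Sum>x\<in>UNIV. \<Sum>y\<in>UNIV. \<Sum>z\<in>UNIV. \<Sum>w\<in>UNIV. C x y z w * ?h$w$x * E_up y z)"
    using sum_product_tensor4_transform[of "\<lambda>a d. g$a$d" E ?h C] by (simp add: g_up E_up_def)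
  also have "\<dots> = (\<Sum>y\<in>UNIV. \<Sum>z\<in>UNIV. \<Sum>x\<in>UNIV. \<Sum>w\<in>UNIV. C x y z w * ?h$w$x * E_up y z)"
    by (rule sum_swap_first_to_third)
  also have "\<dots> = (\<Sum>y\<in>UNIV. \<Sum>z\<in>UNIV. E_up y z * (\<Sum>x\<in>UNIV. \<Sum>w\<in>UNIV. ?h$w$x * C x y z w))"
    by (simp only: sum_distrib_left) (intro sum.cong refl, simp add: mult_ac)
  also have "\<dots> = 0" by (simp add: trace)
  finally show ?thesis .
qed

lemma sq4_electric_weyl:
  assumes g: "lorentzian g" and C: "weyl_tensor g C"
    and decomposition: "\<And>a b c d. C a b c d = electric_weyl g (lower g u) (electric C u) a b c d"
  shows "sq4 g C = 8 * sq2 g (electric C u)"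
proof -
  let ?v = "lower g u" and ?E = "electric C u" and ?C = "tensor4_transform (matrix_inv g) C"
  have C_sym: "curvature_symmetric C" using C by (rule weyl_tensor_curvature_symmetric)
  note C_up = curvature_symmetricD[OF curvature_symmetric_tensor4_transform[OF C_sym]]
  have swap_first: "(\<Sum>a\<in>UNIV. \<Sum>b\<in>UNIV. \<Sum>c\<in>UNIV. \<Sum>d\<in>UNIV. F a b c d * ?C a b c d)
      = - (\<Sum>a\<in>UNIV. \<Sum>b\<in>UNIV. \<Sum>c\<in>UNIV. \<Sum>d\<in>UNIV. F b a c d * ?C a b c d)" for F
    by (rule sum_antisymmetric_first_pair) (rule C_up(1))
  have swap_last: "(\<Sum>a\<in>UNIV. \<Sum>b\<in>UNIV. \<Sum>c\<in>UNIV. \<Sum>d\<in>UNIV. F a b c d * ?C a b c d)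
      = - (\<Sum>a\<in>UNIV. \<Sum>b\<in>UNIV. \<Sum>c\<in>UNIV. \<Sum>d\<in>UNIV. F a b d c * ?C a b c d)" for F
    by (rule sum_antisymmetric_last_pair) (rule C_up(2))
  define uuE_ad where "uuE_ad = (\<Sum>a\<in>UNIV. \<Sum>b\<in>UNIV. \<Sum>c\<in>UNIV. \<Sum>d\<in>UNIV. ?v a * ?v d * ?E b c * ?C a b c d)"
  define uuE_ac where "uuE_ac = (\<Sum>a\<in>UNIV. \<Sum>b\<in>UNIV. \<Sum>c\<in>UNIV. \<Sum>d\<in>UNIV. ?v a * ?v c * ?E b d * ?C a b c d)"
  define uuE_bc where "uuE_bc = (\<Sum>a\<in>UNIV. \<Sum>b\<in>UNIV. \<Sum>c\<in>UNIV. \<Sum>d\<in>UNIV. ?v b * ?v c * ?E a d * ?C a b c d)"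
  define uuE_bd where "uuE_bd = (\<Sum>a\<in>UNIV. \<Sum>b\<in>UNIV. \<Sum>c\<in>UNIV. \<Sum>d\<in>UNIV. ?v b * ?v d * ?E a c * ?C a b c d)"
  define gE_ad where "gE_ad = (\<Sum>a\<in>UNIV. \<Sum>b\<in>UNIV. \<Sum>c\<in>UNIV. \<Sum>d\<in>UNIV. g$a$d * ?E b c * ?C a b c d)"
  define gE_ac where "gE_ac = (\<Sum>a\<in>UNIV. \<Sum>b\<in>UNIV. \<Sum>c\<in>UNIV. \<Sum>d\<in>UNIV. g$a$c * ?E b d * ?C a b c d)"
  define gE_bc where "gE_bc = (\<Sum>a\<in>UNIV. \<Sum>b\<in>UNIV. \<Sum>c\<in>UNIV. \<Sum>d\<in>UNIV. g$b$c * ?E a d * ?C a b c d)"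
  define gE_bd where "gE_bd = (\<Sum>a\<in>UNIV. \<Sum>b\<in>UNIV. \<Sum>c\<in>UNIV. \<Sum>d\<in>UNIV. g$b$d * ?E a c * ?C a b c d)"
  have "sq4 g C = (\<Sum>a\<in>UNIV. \<Sum>b\<in>UNIV. \<Sum>c\<in>UNIV. \<Sum>d\<in>UNIV. C a b c d * ?C a b c d)"
    by (rule sq4_eq_contraction_raised[OF g])
  also have "\<dots> = (\<Sum>a\<in>UNIV. \<Sum>b\<in>UNIV. \<Sum>c\<in>UNIV. \<Sum>d\<in>UNIV.
      2 * (?v a * ?v d * ?E b c * ?C a b c d) - 2 * (?v a * ?v c * ?E b d * ?C a b c d)
      + 2 * (?v b * ?v c * ?E a d * ?C a b c d) - 2 * (?v b * ?v d * ?E a c * ?C a b c d)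
      + g$a$d * ?E b c * ?C a b c d - g$a$c * ?E b d * ?C a b c d
      + g$b$c * ?E a d * ?C a b c d - g$b$d * ?E a c * ?C a b c d)"
    by (intro sum.cong refl) (simp only: decomposition, simp add: electric_weyl_def algebra_simps)
  also have "\<dots> = 2 * uuE_ad - 2 * uuE_ac + 2 * uuE_bc - 2 * uuE_bd + gE_ad - gE_ac + gE_bc - gE_bd"
    unfolding uuE_ad_def uuE_ac_def uuE_bc_def uuE_bd_def gE_ad_def gE_ac_def gE_bc_def gE_bd_def
    by (simp only: sum.distrib sum_subtractf sum_distrib_left[symmetric])
  also have "\<dots> = 8 * uuE_ad + 4 * gE_ad"
  proof -
    have "uuE_ac = - uuE_ad" "gE_ac = - gE_ad"
      unfolding uuE_ac_def uuE_ad_def gE_ac_def gE_ad_def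
      by (simp_all add: swap_last[of "\<lambda>a b c d. ?v a * ?v c * ?E b d"]
          swap_last[of "\<lambda>a b c d. g$a$c * ?E b d"])
    moreover have "uuE_bc = - uuE_ac" "gE_bc = - gE_ac"
      unfolding uuE_bc_def uuE_ac_def gE_bc_def gE_ac_def
      by (simp_all add: swap_first[of "\<lambda>a b c d. ?v b * ?v c * ?E a d"]
          swap_first[of "\<lambda>a b c d. g$b$c * ?E a d"])
    moreover have "uuE_bd = - uuE_ad" "gE_bd = - gE_ad"
      unfolding uuE_bd_def uuE_ad_def gE_bd_def gE_ad_def
      by (simp_all add: swap_first[of "\<lambda>a b c d. ?v b * ?v d * ?E a c"]
          swap_first[of "\<lambda>a b c d. g$b$d * ?E a c"])
    ultimately show ?thesis by simp
  qed
  also have "\<dots> = 8 * sq2 g ?E"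
    unfolding uuE_ad_def gE_ad_def
    using contraction_electric_term[OF g C_sym] contraction_metric_term[OF g C_sym weyl_tensor_traceless[OF C]]
    by simp
  finally show ?thesis .
qed

theorem proposition3p1:
  fixes g :: "real^4^4" and C :: "4 \<Rightarrow> 4 \<Rightarrow> 4 \<Rightarrow> 4 \<Rightarrow> real" and u :: "4 \<Rightarrow> real"
  assumes "lorentzian g"
    and "weyl_tensor g C"
    and "(\<Sum>k\<in>UNIV. lower g u k * u k) = -1"
    and "weyl_compatible g C u"
  shows "(\<forall>a b c d. C a b c d =
            2 * (lower g u a * lower g u d * electric C u b c
               - lower g u a * lower g u c * electric C u b d
               + lower g u b * lower g u c * electric C u a d
               - lower g u b * lower g u d * electric C u a c)
            + g$a$d * electric C u b c - g$a$c * electric C u b d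
            + g$b$c * electric C u a d - g$b$d * electric C u a c)
         \<and> sq4 g C = 8 * sq2 g (electric C u)"
proof -
  have decomposition: "C a b c d = electric_weyl g (lower g u) (electric C u) a b c d" for a b c d
    by (rule weyl_eq_electric_weyl[OF assms])
  then have "sq4 g C = 8 * sq2 g (electric C u)"
    by (rule sq4_electric_weyl[OF assms(1,2)])
  with decomposition show ?thesis unfolding electric_weyl_def by blast
qed

end
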